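(* Let $p$ be a prime, $R$ an $F$-pure ring of characteristic $p$, and $f\in R$ a non-zero non-unit. Let $d\ge1$ be an integer and $\alpha\in[0,1]$ with $(p^d-1)\alpha\in\mathbb{N}$. If the inclusion $R\cdot f^{\langle\alpha\rangle_d}\subseteq R^{1/p^d}$ splits over $R$, then $\alpha\le\operatorname{fpt}(f)$.
   Context: A ring $R$ of characteristic $p$ is $F$-pure if $R\subseteq R^{1/p}$ splits as a map of $R$-modules. Roots and splitting. $R^{1/p^e}$ is the ring of formal $p^e$-th roots of elements of $R$, containing $R$ via $r\mapsto(r^{p^e})^{1/p^e}$. For $a\in\mathbb{N}$, $f^{a/p^e}:=(f^a)^{1/p^e}$. The inclusion $R\cdot t\subseteq R^{1/p^e}$ splits if some $R$-linear $\theta:R^{1/p^e}\to R$ has $\theta(t)=1$. $F$-pure threshold. $(R,f^\lambda)$ is $F$-pure if $R\cdot f^{\lfloor (p^e-1)\lambda\rfloor/p^e}\subseteq R^{1/p^e}$ splits for all $e\ge1$. $\operatorname{fpt}(f)$ is the supremum of $\lambda\ge0$ with $(R,f^\lambda)$ $F$-pure. Truncations. For $\alpha\in(0,1]$ with non-terminating base $p$ expansion $\alpha=\sum_{e\ge1}a_e/p^e$ (digits $0\le a_e\le p-1$, not all eventually zero), $\langle\alpha\rangle_e:=\sum_{i=1}^e a_i/p^i\in\frac1{p^e}\mathbb{N}$, so that $f^{\langle\alpha\rangle_e}\in R^{1/p^e}$. By convention $\langle0\rangle_e=0$. *)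

theory Defs
  imports Complex_Main "HOL-Computational_Algebra.Primes"
begin

text \<open>The ring R^{1/p^e} of formal p^e-th roots is identified with R itself via
  s^{1/p^e} <-> s; under this identification the inclusion R into R^{1/p^e}
  is r |-> r^(p^e), and an R-linear map theta : R^{1/p^e} -> R is exactly an
  additive map phi : R -> R with phi (r^(p^e) * s) = r * phi s.\<close>

definition root_linear :: "nat \<Rightarrow> nat \<Rightarrow> ('a::comm_ring_1 \<Rightarrow> 'a) \<Rightarrow> bool" where
  "root_linear p e \<phi> \<longleftrightarrow>
     (\<forall>x y. \<phi> (x + y) = \<phi> x + \<phi> y) \<and> (\<forall>r s. \<phi> (r ^ (p ^ e) * s) = r * \<phi> s)"

definition root_splits :: "nat \<Rightarrow> nat \<Rightarrow> 'a::comm_ring_1 \<Rightarrow> bool" where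
  "root_splits p e g \<longleftrightarrow> (\<exists>\<phi>. root_linear p e \<phi> \<and> \<phi> g = 1)"

text \<open>R is F-pure: R into R^{1/p} splits (i.e. R * 1^{1/p} splits).\<close>
definition F_pure :: "nat \<Rightarrow> 'a::comm_ring_1 itself \<Rightarrow> bool" where
  "F_pure p _ \<longleftrightarrow> root_splits p 1 (1::'a)"

definition pair_F_pure :: "nat \<Rightarrow> 'a::comm_ring_1 \<Rightarrow> real \<Rightarrow> bool" where
  "pair_F_pure p f lam \<longleftrightarrow>
     (\<forall>e\<ge>1. root_splits p e (f ^ nat \<lfloor>(real p ^ e - 1) * lam\<rfloor>))"

definition fpt :: "nat \<Rightarrow> 'a::comm_ring_1 \<Rightarrow> real" where
  "fpt p f = Sup {lam::real. lam \<ge> 0 \<and> pair_F_pure p f lam}"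

text \<open>Non-terminating base p expansion of alpha in (0,1]: digits a_1, a_2, ...
  (indexed from 1; a_0 is set to 0 for definiteness).\<close>
definition nonterm_digits :: "nat \<Rightarrow> real \<Rightarrow> nat \<Rightarrow> nat" where
  "nonterm_digits p \<alpha> = (THE a. a 0 = 0 \<and> (\<forall>i. a i \<le> p - 1) \<and>
       (\<lambda>i. real (a (Suc i)) / real p ^ Suc i) sums \<alpha> \<and>
       (\<forall>N. \<exists>i\<ge>N. a i \<noteq> 0))"

text \<open>Numerator of the truncation: <alpha>_e = trunc_num p alpha e / p^e,
  with the convention <0>_e = 0.\<close>
definition trunc_num :: "nat \<Rightarrow> real \<Rightarrow> nat \<Rightarrow> nat" where
  "trunc_num p \<alpha> e = (if \<alpha> = 0 then 0
      else (\<Sum>i=1..e. nonterm_digits p \<alpha> i * p ^ (e - i)))"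

end

theory Submission
  imports Defs
begin

text \<open>If \<open>\<phi>\<close> splits \<open>f ^ k\<close> at level \<open>d\<close>, composing \<open>e\<close> copies of \<open>\<phi>\<close> splits
  \<open>f ^ (k * (1 + p ^ d + \<dots> + p ^ ((e - 1) * d))) = f ^ ((p ^ (e * d) - 1) * \<alpha>)\<close> at level \<open>e * d\<close>.
  Precomposing with the Frobenius \<open>x \<mapsto> x ^ p ^ c\<close>, \<open>c = e * d - e\<close>, which is additive in
  characteristic \<open>p\<close>, lowers the level to \<open>e\<close> and divides the exponent by \<open>p ^ c\<close>; the quotient still
  dominates \<open>\<lfloor>(p ^ e - 1) * \<alpha>\<rfloor>\<close>, so \<open>(R, f ^ \<alpha>)\<close> is \<open>F\<close>-pure. The hypothesis is about \<open>f ^ k\<close>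
  because the \<open>e\<close>-th truncation of a non-terminating expansion has numerator \<open>\<lceil>p ^ e * \<alpha>\<rceil> - 1\<close>,
  which is \<open>k\<close> for \<open>e = d\<close>.\<close>

lemma root_linear_mult_left:
  assumes "root_linear p e \<phi>"
  shows "root_linear p e (\<lambda>x. \<phi> (h * x))"
  using assms unfolding root_linear_def
  by (simp add: distrib_left) (metis mult.left_commute)

lemma root_splits_dvd:
  assumes "g dvd g'" and "root_splits p e g'"
  shows "root_splits p e g"
proof -
  obtain h where h: "g' = g * h" using assms(1) by blast
  obtain \<phi> where \<phi>: "root_linear p e \<phi>" "\<phi> g' = 1"
    using assms(2) unfolding root_splits_def by blast
  have "\<phi> (h * g) = 1" using \<phi>(2) h by (simp add: mult.commute)
  then show ?thesis using root_linear_mult_left[OF \<phi>(1)] unfolding root_splits_def by blast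
qed

lemma root_splits_power_mono:
  assumes "root_splits p e (f ^ n)" and "m \<le> n"
  shows "root_splits p e (f ^ m)"
  using root_splits_dvd[OF le_imp_power_dvd[OF assms(2)] assms(1)] .

lemma root_linear_comp:
  assumes "root_linear p a \<phi>" and "root_linear p b \<psi>"
  shows "root_linear p (a + b) (\<psi> \<circ> \<phi>)"
proof -
  have "r ^ p ^ (a + b) = (r ^ p ^ b) ^ p ^ a" for r :: 'a
    by (simp add: power_add power_mult[symmetric] mult.commute)
  then show ?thesis using assms unfolding root_linear_def by simp
qed

lemma root_splits_mult_power:
  assumes "root_splits p a g" and "root_splits p b h"
  shows "root_splits p (a + b) (g * h ^ p ^ a)"
proof -
  obtain \<phi> \<psi> where \<phi>: "root_linear p a \<phi>" "\<phi> g = 1" and \<psi>: "root_linear p b \<psi>" "\<psi> h = 1"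
    using assms unfolding root_splits_def by blast
  have "(\<psi> \<circ> \<phi>) (g * h ^ p ^ a) = 1"
    using \<phi> \<psi> unfolding root_linear_def by (metis comp_apply mult.commute mult_1_right)
  then show ?thesis using root_linear_comp[OF \<phi>(1) \<psi>(1)] unfolding root_splits_def by blast
qed

lemma root_linear_frobenius:
  fixes \<phi> :: "'a::comm_ring_1 \<Rightarrow> 'a"
  assumes "prime p" and "CHAR('a) = p" and "root_linear p (e + c) \<phi>"
  shows "root_linear p e (\<lambda>x. \<phi> (x ^ p ^ c))"
proof -
  have "(x + y) ^ p ^ c = x ^ p ^ c + y ^ p ^ c" for x y :: 'a
    using freshmans_dream'[of "p ^ c" c x y] assms(1,2) by simp
  moreover have "(r ^ p ^ e * s) ^ p ^ c = r ^ p ^ (e + c) * s ^ p ^ c" for r s :: 'a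
    by (simp add: power_mult_distrib power_add power_mult[symmetric])
  ultimately show ?thesis using assms(3) unfolding root_linear_def by simp
qed

lemma root_splits_frobenius_descent:
  fixes g :: "'a::comm_ring_1"
  assumes "prime p" and "CHAR('a) = p" and "root_splits p (e + c) (g ^ p ^ c)"
  shows "root_splits p e g"
  using assms root_linear_frobenius[OF assms(1,2)] unfolding root_splits_def by blast

lemma root_splits_iterate:
  fixes f :: "'a::comm_ring_1"
  assumes "root_splits p d (f ^ k)"
  shows "root_splits p (Suc n * d) (f ^ (k * (\<Sum>j<Suc n. p ^ (d * j))))"
proof (induction n)
  case 0
  then show ?case using assms by simp
next
  case (Suc n)
  have "k * (\<Sum>j<Suc (Suc n). p ^ (d * j)) = k + k * (\<Sum>j<Suc n. p ^ (d * j)) * p ^ d"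
    by (subst sum.lessThan_Suc_shift)
       (simp add: sum_distrib_left sum_distrib_right algebra_simps power_add)
  then have "f ^ k * (f ^ (k * (\<Sum>j<Suc n. p ^ (d * j)))) ^ p ^ d
      = f ^ (k * (\<Sum>j<Suc (Suc n). p ^ (d * j)))"
    by (simp only: power_add power_mult)
  then show ?case using root_splits_mult_power[OF assms Suc] by (simp add: add.commute)
qed

text \<open>A splitting of \<open>f ^ p ^ e\<close> evaluates to \<open>f * \<phi> 1 = 1\<close>.\<close>
lemma root_splits_power_imp_unit:
  assumes "root_splits p e (f ^ p ^ e)"
  shows "f dvd 1"
proof -
  obtain \<phi> where "root_linear p e \<phi>" and "\<phi> (f ^ p ^ e * 1) = 1"
    using assms unfolding root_splits_def by auto
  then have "f * \<phi> 1 = 1" unfolding root_linear_def by metis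
  then show ?thesis by (metis dvdI)
qed

definition nonterm_expansion :: "nat \<Rightarrow> real \<Rightarrow> (nat \<Rightarrow> nat) \<Rightarrow> bool" where
  "nonterm_expansion p \<alpha> a \<longleftrightarrow> a 0 = 0 \<and> (\<forall>i. a i \<le> p - 1) \<and>
       (\<lambda>i. real (a (Suc i)) / real p ^ Suc i) sums \<alpha> \<and> (\<forall>N. \<exists>i\<ge>N. a i \<noteq> 0)"

definition digit_prefix :: "nat \<Rightarrow> (nat \<Rightarrow> nat) \<Rightarrow> nat \<Rightarrow> nat" where
  "digit_prefix p a e = (\<Sum>i=1..e. a i * p ^ (e - i))"

lemma digit_prefix_0 [simp]: "digit_prefix p a 0 = 0"
  by (simp add: digit_prefix_def)

lemma digit_prefix_Suc: "digit_prefix p a (Suc e) = p * digit_prefix p a e + a (Suc e)"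
proof -
  have "(\<Sum>i=1..e. a i * p ^ (Suc e - i)) = p * (\<Sum>i=1..e. a i * p ^ (e - i))"
    unfolding sum_distrib_left by (rule sum.cong) (auto simp: Suc_diff_le)
  then show ?thesis unfolding digit_prefix_def by (simp add: sum.cl_ivl_Suc)
qed

lemma partial_sum_eq_digit_prefix:
  assumes "p > 0"
  shows "(\<Sum>i<e. real (a (Suc i)) / real p ^ Suc i) = real (digit_prefix p a e) / real p ^ e"
  by (induction e) (use assms in \<open>simp_all add: digit_prefix_Suc field_simps\<close>)

text \<open>The tail after \<open>e\<close> digits is positive because the expansion does not terminate,
  and at most \<open>p ^ -e\<close> because it is dominated by \<open>\<Sum>\<^sub>n (p - 1) / p ^ (e + 1 + n)\<close>.\<close>
lemma nonterm_expansion_prefix_bounds: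
  assumes p: "p \<ge> 2" and a: "nonterm_expansion p \<alpha> a"
  shows "real (digit_prefix p a e) < real p ^ e * \<alpha>"
    and "real p ^ e * \<alpha> \<le> real (digit_prefix p a e) + 1"
proof -
  define f where "f i = real (a (Suc i)) / real p ^ Suc i" for i
  have fs: "f sums \<alpha>" using a unfolding nonterm_expansion_def f_def by simp
  have summ: "summable f" using fs sums_summable by blast
  have split: "\<alpha> = (\<Sum>n. f (n + e)) + sum f {..<e}"
    using suminf_split_initial_segment[OF summ, of e] sums_unique[OF fs] by simp
  have tail: "(\<lambda>n. f (n + e)) sums (\<Sum>n. f (n + e))"
    using summable_ignore_initial_segment[OF summ] summable_sums by blast
  have pp: "real p \<ge> 2" using p by simp
  define c where "c = (real p - 1) / real p ^ Suc e"
  have geo: "(\<lambda>n. c * (1 / real p) ^ n) sums (1 / real p ^ e)"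
  proof -
    have "(\<lambda>n. c * (1 / real p) ^ n) sums (c * (1 / (1 - 1 / real p)))"
      by (rule sums_mult, rule geometric_sums) (use pp in auto)
    moreover have "c * (1 / (1 - 1 / real p)) = 1 / real p ^ e"
      unfolding c_def using pp by (simp add: field_simps)
    ultimately show ?thesis by simp
  qed
  have "f (n + e) \<le> c * (1 / real p) ^ n" for n
  proof -
    have "real (a (Suc (n + e))) \<le> real p - 1"
      using a p unfolding nonterm_expansion_def
      by (metis of_nat_1 of_nat_diff of_nat_le_iff one_le_numeral order_trans)
    moreover have "real p ^ Suc (n + e) = real p ^ Suc e * real p ^ n"
      by (simp add: power_add[symmetric] add.commute)
    ultimately show ?thesis unfolding f_def c_def using pp
      by (simp add: power_divide mult.assoc) (rule divide_right_mono, auto)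
  qed
  then have up: "(\<Sum>n. f (n + e)) \<le> 1 / real p ^ e"
    using sums_le[OF _ tail geo] by blast
  obtain i where i: "i \<ge> Suc e" "a i \<noteq> 0" using a unfolding nonterm_expansion_def by blast
  then have "f (i - Suc e + e) > 0" using pp by (simp add: f_def Suc_diff_Suc)
  then have lo: "(\<Sum>n. f (n + e)) > 0"
    using suminf_pos2[OF summable_ignore_initial_segment[OF summ]] by (simp add: f_def)
  have ps: "sum f {..<e} = real (digit_prefix p a e) / real p ^ e"
    unfolding f_def using partial_sum_eq_digit_prefix p by simp
  have pe: "real p ^ e > 0" using pp by simp
  show "real (digit_prefix p a e) < real p ^ e * \<alpha>"
    using split lo ps pe by (simp add: field_simps)
  show "real p ^ e * \<alpha> \<le> real (digit_prefix p a e) + 1"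
    using split up ps pe by (simp add: field_simps)
qed

lemma nonterm_expansion_prefix_eq_ceiling:
  assumes "p \<ge> 2" and "nonterm_expansion p \<alpha> a"
  shows "int (digit_prefix p a e) = \<lceil>real p ^ e * \<alpha>\<rceil> - 1"
proof -
  have "\<lceil>real p ^ e * \<alpha>\<rceil> = int (digit_prefix p a e) + 1"
    by (rule ceiling_unique) (use nonterm_expansion_prefix_bounds[OF assms, of e] in auto)
  then show ?thesis by simp
qed

lemma nonterm_expansion_unique:
  assumes "p \<ge> 2" and "nonterm_expansion p \<alpha> a" and "nonterm_expansion p \<alpha> b"
  shows "a = b"
proof
  fix i
  have prefix: "digit_prefix p a e = digit_prefix p b e" for e
    using nonterm_expansion_prefix_eq_ceiling[OF assms(1)] assms(2,3) by (metis of_nat_eq_iff)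
  show "a i = b i"
  proof (cases i)
    case 0
    then show ?thesis using assms unfolding nonterm_expansion_def by simp
  next
    case (Suc j)
    then show ?thesis using prefix[of "Suc j"] prefix[of j] by (simp add: digit_prefix_Suc)
  qed
qed

text \<open>Using ceilings rather than floors is what makes the expansion non-terminating.\<close>
definition ceiling_digits :: "nat \<Rightarrow> real \<Rightarrow> nat \<Rightarrow> nat" where
  "ceiling_digits p \<alpha> i = (case i of 0 \<Rightarrow> 0
     | Suc j \<Rightarrow> nat (\<lceil>real p ^ Suc j * \<alpha>\<rceil> - 1 - int p * (\<lceil>real p ^ j * \<alpha>\<rceil> - 1)))"

lemma ceiling_digits_Suc:
  assumes "p > 0"
  shows "int (ceiling_digits p \<alpha> (Suc j))
    = \<lceil>real p ^ Suc j * \<alpha>\<rceil> - 1 - int p * (\<lceil>real p ^ j * \<alpha>\<rceil> - 1)"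
proof -
  have "of_int (\<lceil>real p ^ j * \<alpha>\<rceil> - 1) < real p ^ j * \<alpha>" by linarith
  then have "real p * of_int (\<lceil>real p ^ j * \<alpha>\<rceil> - 1) < real p ^ Suc j * \<alpha>"
    using assms by simp
  then have "int p * (\<lceil>real p ^ j * \<alpha>\<rceil> - 1) < \<lceil>real p ^ Suc j * \<alpha>\<rceil>"
    by (simp add: less_ceiling_iff)
  then show ?thesis unfolding ceiling_digits_def by simp
qed

lemma ceiling_digits_le:
  assumes "p > 0"
  shows "ceiling_digits p \<alpha> i \<le> p - 1"
proof (cases i)
  case (Suc j)
  have "real p * (real p ^ j * \<alpha>) \<le> real p * of_int \<lceil>real p ^ j * \<alpha>\<rceil>"
    using assms by simp
  then have "\<lceil>real p ^ Suc j * \<alpha>\<rceil> \<le> int p * \<lceil>real p ^ j * \<alpha>\<rceil>"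
    by (simp add: ceiling_le mult.assoc)
  then have "int (ceiling_digits p \<alpha> i) \<le> int p - 1"
    using ceiling_digits_Suc[OF assms, of \<alpha> j] Suc by (simp add: right_diff_distrib)
  then show ?thesis by linarith
qed (simp add: ceiling_digits_def)

lemma ceiling_digits_prefix:
  assumes "p > 0" and "0 < \<alpha>" and "\<alpha> \<le> 1"
  shows "int (digit_prefix p (ceiling_digits p \<alpha>) e) = \<lceil>real p ^ e * \<alpha>\<rceil> - 1"
proof (induction e)
  case 0
  then show ?case using assms(2,3) by (simp add: ceiling_unique)
next
  case (Suc e)
  then show ?case by (simp add: digit_prefix_Suc ceiling_digits_Suc[OF assms(1)])
qed

lemma nonterm_expansion_ceiling_digits:
  assumes p: "p \<ge> 2" and "0 < \<alpha>" and "\<alpha> \<le> 1"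
  shows "nonterm_expansion p \<alpha> (ceiling_digits p \<alpha>)"
proof -
  define f where "f i = real (ceiling_digits p \<alpha> (Suc i)) / real p ^ Suc i" for i
  have pp: "real p \<ge> 2" using p by simp
  have bounds: "\<alpha> - (1 / real p) ^ e \<le> sum f {..<e} \<and> sum f {..<e} < \<alpha>" for e
  proof -
    have "sum f {..<e} = (of_int \<lceil>real p ^ e * \<alpha>\<rceil> - 1) / real p ^ e"
      using partial_sum_eq_digit_prefix[where a="ceiling_digits p \<alpha>"]
        ceiling_digits_prefix[OF _ assms(2,3)] p
      unfolding f_def by (metis of_int_1 of_int_diff of_int_of_nat_eq zero_less_numeral less_le_trans)
    moreover have pe: "real p ^ e > 0" using pp by simp
    moreover have "real p ^ e * \<alpha> / real p ^ e \<le> of_int \<lceil>real p ^ e * \<alpha>\<rceil> / real p ^ e"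
      and "(of_int \<lceil>real p ^ e * \<alpha>\<rceil> - 1) / real p ^ e < real p ^ e * \<alpha> / real p ^ e"
      using pe by (intro divide_right_mono divide_strict_right_mono; linarith)+
    ultimately show ?thesis by (simp add: power_divide diff_divide_distrib)
  qed
  have "(\<lambda>e. \<alpha> - sum f {..<e}) \<longlonglongrightarrow> 0"
  proof (rule tendsto_sandwich[of "\<lambda>_. 0" _ _ "\<lambda>e. (1 / real p) ^ e"])
    show "(\<lambda>e. (1 / real p) ^ e) \<longlonglongrightarrow> 0"
      by (rule LIMSEQ_power_zero) (use pp in simp)
  qed (use bounds in \<open>auto intro!: always_eventually simp: less_imp_le algebra_simps\<close>)
  then have "(\<lambda>e. \<alpha> - (\<alpha> - sum f {..<e})) \<longlonglongrightarrow> \<alpha> - 0"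
    by (intro tendsto_diff tendsto_const)
  then have sums: "f sums \<alpha>" by (simp add: sums_def)
  have "\<exists>i\<ge>N. ceiling_digits p \<alpha> i \<noteq> 0" for N
  proof (rule ccontr)
    assume "\<not> ?thesis"
    then have "f sums sum f {..<N}"
      by (intro sums_finite) (auto simp: f_def)
    then show False using sums bounds[of N] sums_unique2 by fastforce
  qed
  then show ?thesis
    using sums ceiling_digits_le[of p \<alpha>] p
    unfolding nonterm_expansion_def f_def by (simp add: ceiling_digits_def)
qed

lemma nonterm_digits_eq:
  assumes "p \<ge> 2" and "0 < \<alpha>" and "\<alpha> \<le> 1"
  shows "nonterm_digits p \<alpha> = ceiling_digits p \<alpha>"
  unfolding nonterm_digits_def nonterm_expansion_def[symmetric]
  by (rule the_equality)
    (use nonterm_expansion_ceiling_digits[OF assms] nonterm_expansion_unique[OF assms(1)] in blast)+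

lemma trunc_num_eq_ceiling:
  assumes "p \<ge> 2" and "0 < \<alpha>" and "\<alpha> \<le> 1"
  shows "int (trunc_num p \<alpha> e) = \<lceil>real p ^ e * \<alpha>\<rceil> - 1"
  using ceiling_digits_prefix[of p \<alpha> e] assms
  by (simp add: trunc_num_def nonterm_digits_eq digit_prefix_def)

lemma trunc_num_periodic:
  assumes "p \<ge> 2" and "0 \<le> \<alpha>" and "\<alpha> \<le> 1" and "(real p ^ d - 1) * \<alpha> = real k"
  shows "trunc_num p \<alpha> d = k"
proof (cases "\<alpha> = 0")
  case True
  then show ?thesis using assms(4) by (simp add: trunc_num_def)
next
  case False
  have "real p ^ d * \<alpha> = real k + \<alpha>" using assms(4) by (simp add: algebra_simps)
  then have "\<lceil>real p ^ d * \<alpha>\<rceil> = int k + 1"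
    using False assms(2,3) by (intro ceiling_unique) auto
  then show ?thesis using trunc_num_eq_ceiling[of p \<alpha> d] False assms(1-3) by simp
qed

lemma power_diff_1_eq_sum_power_mult:
  fixes x :: "'a::comm_ring_1"
  shows "(x ^ d - 1) * (\<Sum>j<n. x ^ (d * j)) = x ^ (n * d) - 1"
proof -
  have "(\<Sum>j<n. x ^ (d * j)) = (\<Sum>j<n. (x ^ d) ^ j)" and "x ^ (n * d) = (x ^ d) ^ n"
    by (simp_all add: power_mult[symmetric] mult.commute)
  then show ?thesis using power_diff_1_eq[of "x ^ d" n] by simp
qed

lemma nat_floor_mult_power_le:
  assumes "real p \<ge> 1" and "0 \<le> \<alpha>" and "e \<le> n" and "real N = (real p ^ n - 1) * \<alpha>"
  shows "nat \<lfloor>(real p ^ e - 1) * \<alpha>\<rfloor> * p ^ (n - e) \<le> N"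
proof -
  have pe: "real p ^ e \<ge> 1" and pc: "real p ^ (n - e) \<ge> 1" using assms(1) by simp_all
  have "real (nat \<lfloor>(real p ^ e - 1) * \<alpha>\<rfloor> * p ^ (n - e))
      \<le> (real p ^ e - 1) * \<alpha> * real p ^ (n - e)"
    using pe assms(2) by (simp add: mult_right_mono)
  also have "\<dots> = (real p ^ n - real p ^ (n - e)) * \<alpha>"
    using assms(3) by (simp add: algebra_simps power_add[symmetric])
  also have "\<dots> \<le> real N"
    using pc assms(2,4) by (simp add: mult_right_mono)
  finally show ?thesis by linarith
qed

lemma pair_F_pure_of_root_splits:
  fixes f :: "'a::comm_ring_1"
  assumes "prime p" and "CHAR('a) = p" and "d \<ge> 1" and "0 \<le> \<alpha>"
    and k: "(real p ^ d - 1) * \<alpha> = real k" and split: "root_splits p d (f ^ k)"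
  shows "pair_F_pure p f \<alpha>"
  unfolding pair_F_pure_def
proof (intro allI impI)
  fix e :: nat
  assume "e \<ge> 1"
  define S where "S = (\<Sum>j<e. p ^ (d * j))"
  have "root_splits p (e * d) (f ^ (k * S))"
    using root_splits_iterate[OF split, of "e - 1"] \<open>e \<ge> 1\<close> by (simp add: S_def)
  moreover have "real (k * S) = (real p ^ d - 1) * (\<Sum>j<e. real p ^ (d * j)) * \<alpha>"
    using k by (simp add: S_def)
  then have "real (k * S) = (real p ^ (e * d) - 1) * \<alpha>"
    by (simp only: power_diff_1_eq_sum_power_mult)
  then have "nat \<lfloor>(real p ^ e - 1) * \<alpha>\<rfloor> * p ^ (e * d - e) \<le> k * S"
    using assms(1,3,4) prime_ge_1_nat by (intro nat_floor_mult_power_le) auto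
  ultimately have
    "root_splits p (e + (e * d - e)) ((f ^ nat \<lfloor>(real p ^ e - 1) * \<alpha>\<rfloor>) ^ p ^ (e * d - e))"
    using assms(3) by (simp add: power_mult[symmetric] root_splits_power_mono)
  then show "root_splits p e (f ^ nat \<lfloor>(real p ^ e - 1) * \<alpha>\<rfloor>)"
    by (rule root_splits_frobenius_descent[OF assms(1,2)])
qed

lemma bdd_above_pair_F_pure:
  assumes "p \<ge> 2" and "\<not> f dvd 1"
  shows "bdd_above {lam::real. lam \<ge> 0 \<and> pair_F_pure p f lam}"
proof (rule bdd_aboveI)
  fix lam assume "lam \<in> {lam::real. lam \<ge> 0 \<and> pair_F_pure p f lam}"
  then have "root_splits p 1 (f ^ nat \<lfloor>(real p - 1) * lam\<rfloor>)"
    unfolding pair_F_pure_def by auto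
  then have "\<not> p \<le> nat \<lfloor>(real p - 1) * lam\<rfloor>"
    using assms(2) root_splits_power_mono root_splits_power_imp_unit[of p 1 f] by force
  then have "(real p - 1) * lam < real p"
    by (metis le_nat_floor not_le)
  also have "\<dots> \<le> (real p - 1) * 2"
    using assms(1) by simp
  finally have "(real p - 1) * lam < (real p - 1) * 2" .
  then show "lam \<le> 2"
    using assms(1) by (simp only: mult_less_cancel_left) simp
qed

theorem mainTheorem7:
  fixes f :: "'a::comm_ring_1" and p d :: nat and \<alpha> :: real
  assumes "prime p"
    and "CHAR('a) = p"
    and "F_pure p TYPE('a)"
    and "f \<noteq> 0" and "\<not> f dvd 1"
    and "d \<ge> 1"
    and "0 \<le> \<alpha>" and "\<alpha> \<le> 1"
    and "(real p ^ d - 1) * \<alpha> \<in> \<nat>"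
    and "root_splits p d (f ^ trunc_num p \<alpha> d)"
  shows "\<alpha> \<le> fpt p f"
proof -
  have p: "p \<ge> 2" using assms(1) prime_ge_2_nat by blast
  obtain k where k: "(real p ^ d - 1) * \<alpha> = real k"
    using assms(9) Nats_cases by metis
  then have "root_splits p d (f ^ k)"
    using assms(10) trunc_num_periodic[OF p assms(7,8)] by simp
  then have "pair_F_pure p f \<alpha>"
    using pair_F_pure_of_root_splits assms(1,2,6,7) k by blast
  then show ?thesis
    unfolding fpt_def using assms(7) bdd_above_pair_F_pure[OF p assms(5)] by (auto intro: cSup_upper)
qed

end
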